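(* Let $a>0$ and let $\mathcal{G}$ be the real Lie algebra with basis $X_1,X_2,X_3$ and brackets $[X_1,X_2]=-aX_2+X_3$, $[X_2,X_3]=0$, $[X_3,X_1]=X_2+aX_3$ (Bianchi type $VII_a$). Every real Manin triple $(\mathcal{D},\mathcal{G}',\tilde{\mathcal{G}}')$ with $\mathcal{G}'\cong\mathcal{G}$ is isomorphic to exactly one Manin triple $(\mathcal{D},\mathcal{G},\tilde{\mathcal{G}})$ in which $\tilde{\mathcal{G}}$, in the basis $\tilde X^1,\tilde X^2,\tilde X^3$ dual to $X_1,X_2,X_3$, has one of the following bracket structures: (a) (Bianchi $I$) all brackets zero; (b) (Bianchi $II$) (i) $[\tilde X^1,\tilde X^2]=0$, $[\tilde X^2,\tilde X^3]=\tilde X^1$, $[\tilde X^3,\tilde X^1]=0$; (ii) $[\tilde X^1,\tilde X^2]=0$, $[\tilde X^2,\tilde X^3]=-\tilde X^1$, $[\tilde X^3,\tilde X^1]=0$; (c) (Bianchi $VII_{1/a}$) $[\tilde X^1,\tilde X^2]=b(-\tfrac1a\tilde X^2+\tilde X^3)$, $[\tilde X^2,\tilde X^3]=0$, $[\tilde X^3,\tilde X^1]=b(\tilde X^2+\tfrac1a\tilde X^3)$, with $b\in\mathbb{R}\setminus\{0\}$.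
   Context: A real Manin triple $(\mathcal{D},\mathcal{G},\tilde{\mathcal{G}})$ consists of a real Lie algebra $\mathcal{D}$ with a symmetric, ad-invariant, nondegenerate bilinear form $\langle\cdot,\cdot\rangle$, and two maximally isotropic Lie subalgebras $\mathcal{G},\tilde{\mathcal{G}}$ with $\mathcal{D}=\mathcal{G}\oplus\tilde{\mathcal{G}}$ as vector spaces; here $\dim\mathcal{D}=6$, $\dim\mathcal{G}=\dim\tilde{\mathcal{G}}=3$. Bases $X_i$ of $\mathcal{G}$ and $\tilde X^i$ of $\tilde{\mathcal{G}}$ are dual if $\langle X_i,X_j\rangle=0$, $\langle X_i,\tilde X^j\rangle=\delta_i^j$, $\langle\tilde X^i,\tilde X^j\rangle=0$. If $[X_i,X_j]=f_{ij}{}^kX_k$ and $[\tilde X^i,\tilde X^j]=\tilde f^{ij}{}_k\tilde X^k$, ad-invariance forces $[X_i,\tilde X^j]=f_{ki}{}^j\tilde X^k+\tilde f^{jk}{}_iX_k$, so the triple is determined by the brackets of $\mathcal{G}$ and $\tilde{\mathcal{G}}$ in dual bases. Two Manin triples are isomorphic if there is a Lie algebra isomorphism of the doubles preserving the bilinear forms and mapping first subalgebra to first subalgebra and second to second; equivalently, they are related by a change of basis $X_i'=X_kA^k{}_i$, $\tilde X'^j=(A^{-1})^j{}_k\tilde X^k$. Different values of the parameter $b$ give non-isomorphic triples. *)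

theory Defs
  imports Complex_Main
begin

text \<open>Basis indices are natural numbers; the Lie algebra
  G uses indices 0,1,2 (for X_1,X_2,X_3). Structure constants are functions
  c :: nat => nat => nat => real with [e_i,e_j] = sum_k c i j k e_k.
  Only indices below the dimension are meaningful.\<close>

type_synonym sc = "nat \<Rightarrow> nat \<Rightarrow> nat \<Rightarrow> real"

definition lie_sc :: "nat \<Rightarrow> sc \<Rightarrow> bool" where
  "lie_sc n c \<longleftrightarrow>
     (\<forall>i<n. \<forall>j<n. \<forall>k<n. c i j k = - c j i k) \<and>
     (\<forall>i<n. \<forall>j<n. \<forall>k<n. \<forall>m<n.
        (\<Sum>l<n. c i j l * c l k m + c j k l * c l i m + c k i l * c l j m) = 0)"

text \<open>Structure constants of the 6-dimensional double D = G + G~ in the basis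
  e_0,e_1,e_2 = X_1,X_2,X_3 and e_3,e_4,e_5 = X~^1,X~^2,X~^3 (dual basis w.r.t.
  the canonical form), with [X_i,X_j] = f_ij^k X_k, [X~^i,X~^j] = ft^ij_k X~^k and
  [X_i,X~^j] = f_ki^j X~^k + ft^jk_i X_k.  Here f i j k = f_ij^k and
  ft i j k = ft^ij_k.\<close>

definition double_sc :: "sc \<Rightarrow> sc \<Rightarrow> sc" where
  "double_sc f ft i j m =
     (if i < 3 \<and> j < 3 then (if m < 3 then f i j m else 0)
      else if i < 3 \<and> 3 \<le> j then
        (if m < 3 then ft (j - 3) m i else f (m - 3) i (j - 3))
      else if 3 \<le> i \<and> j < 3 then
        (if m < 3 then - ft (i - 3) m j else - f (m - 3) j (i - 3))
      else (if m < 3 then 0 else ft (i - 3) (j - 3) (m - 3)))"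

text \<open>(f, ft) defines a real Manin triple (D, G, G~) in dual bases iff the double
  bracket is a Lie bracket (the canonical pairing is then automatically
  symmetric, ad-invariant, nondegenerate, and G, G~ maximally isotropic).\<close>

definition manin :: "sc \<Rightarrow> sc \<Rightarrow> bool" where
  "manin f ft \<longleftrightarrow> lie_sc 3 f \<and> lie_sc 3 ft \<and> lie_sc 6 (double_sc f ft)"

definition inv3 :: "(nat \<Rightarrow> nat \<Rightarrow> real) \<Rightarrow> (nat \<Rightarrow> nat \<Rightarrow> real) \<Rightarrow> bool" where
  "inv3 A B \<longleftrightarrow>
     (\<forall>i<3. \<forall>j<3. (\<Sum>k<3. A i k * B k j) = (if i = j then 1 else 0)) \<and>
     (\<forall>i<3. \<forall>j<3. (\<Sum>k<3. B i k * A k j) = (if i = j then 1 else 0))"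

text \<open>Change of basis X'_i = X_k A^k_i (A k i = A^k_i), B = A^{-1}.\<close>

definition trans_G :: "(nat \<Rightarrow> nat \<Rightarrow> real) \<Rightarrow> (nat \<Rightarrow> nat \<Rightarrow> real) \<Rightarrow> sc \<Rightarrow> sc" where
  "trans_G A B f i j n = (\<Sum>k<3. \<Sum>l<3. \<Sum>m<3. A k i * A l j * f k l m * B n m)"

text \<open>Dual change of basis X~'^j = (A^{-1})^j_k X~^k.\<close>

definition trans_Gt :: "(nat \<Rightarrow> nat \<Rightarrow> real) \<Rightarrow> (nat \<Rightarrow> nat \<Rightarrow> real) \<Rightarrow> sc \<Rightarrow> sc" where
  "trans_Gt A B ft i j n = (\<Sum>k<3. \<Sum>l<3. \<Sum>m<3. B i k * B j l * ft k l m * A m n)"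

definition lie_iso3 :: "sc \<Rightarrow> sc \<Rightarrow> bool" where
  "lie_iso3 f g \<longleftrightarrow> (\<exists>A B. inv3 A B \<and>
      (\<forall>i<3. \<forall>j<3. \<forall>n<3. g i j n = trans_G A B f i j n))"

definition manin_iso :: "sc \<Rightarrow> sc \<Rightarrow> sc \<Rightarrow> sc \<Rightarrow> bool" where
  "manin_iso f ft g gt \<longleftrightarrow> (\<exists>A B. inv3 A B \<and>
      (\<forall>i<3. \<forall>j<3. \<forall>n<3. g i j n = trans_G A B f i j n \<and>
                           gt i j n = trans_Gt A B ft i j n))"

definition vec3 :: "real \<Rightarrow> real \<Rightarrow> real \<Rightarrow> nat \<Rightarrow> real" where
  "vec3 x y z k = (if k = 0 then x else if k = 1 then y else if k = 2 then z else 0)"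

definition sc_of :: "(nat \<Rightarrow> real) \<Rightarrow> (nat \<Rightarrow> real) \<Rightarrow> (nat \<Rightarrow> real) \<Rightarrow> sc" where
  "sc_of c01 c12 c20 i j k =
     (if i = 0 \<and> j = 1 then c01 k else if i = 1 \<and> j = 0 then - c01 k
      else if i = 1 \<and> j = 2 then c12 k else if i = 2 \<and> j = 1 then - c12 k
      else if i = 2 \<and> j = 0 then c20 k else if i = 0 \<and> j = 2 then - c20 k
      else 0)"

definition bianchi7 :: "real \<Rightarrow> sc" where
  "bianchi7 a = sc_of (vec3 0 (-a) 1) (vec3 0 0 0) (vec3 0 1 a)"

definition canonical_dual :: "real \<Rightarrow> sc \<Rightarrow> bool" where
  "canonical_dual a ft \<longleftrightarrow>
     ft = sc_of (vec3 0 0 0) (vec3 0 0 0) (vec3 0 0 0) \<or>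
     ft = sc_of (vec3 0 0 0) (vec3 1 0 0) (vec3 0 0 0) \<or>
     ft = sc_of (vec3 0 0 0) (vec3 (-1) 0 0) (vec3 0 0 0) \<or>
     (\<exists>b. b \<noteq> 0 \<and>
        ft = sc_of (vec3 0 (-(b / a)) b) (vec3 0 0 0) (vec3 0 b (b / a)))"

end

theory Submission
  imports Defs
begin

(*
  Structure constants transform tensorially under a change of basis, and on the double a change
  of basis A of G acts block-diagonally, by A on G and by the transpose of A^-1 on G~. Hence it
  preserves the Jacobi identity of the double, and manin_iso is an equivalence relation that
  carries Manin triples to Manin triples; so one may assume G' = VII_a in its standard basis.

  For G = VII_a the Jacobi identities of the double cut the nine structure constants of G~ down
  to four, p1 = [X~2,X~3]_1, q1 = [X~3,X~1]_1, r1 = [X~1,X~2]_1 and s = [X~1,X~2]_2, subject to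
  s p1 (1 + a^2) + a (q1^2 + r1^2) = 0. If s <> 0, an automorphism X_1 |-> X_1 + v2 X_2 + v3 X_3
  of VII_a removes p1, q1, r1, which is case (c) with b = -a s. If s = 0, then q1 = r1 = 0, and
  rescaling X_2, X_3 by l multiplies p1 by l^2, giving cases (a) and (b).

  For uniqueness: since a > 0, every automorphism of VII_a fixes X_1 modulo span {X_2, X_3} and
  acts on that plane as a rotation-dilation with some factor t > 0. It leaves s unchanged and
  scales p1 by t, so s and the sign of p1 are invariants.
*)

section \<open>Change of basis for structure constants\<close>

lemma sum_rotate3:
  "(\<Sum>i\<in>I. \<Sum>j\<in>J. \<Sum>k\<in>K. g i j k) = (\<Sum>k\<in>K. \<Sum>i\<in>I. \<Sum>j\<in>J. (g i j k :: 'a::comm_monoid_add))"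
  by (subst sum.swap) (rule sum.cong[OF refl], rule sum.swap)

lemma sum_rotate4:
  "(\<Sum>i\<in>I. \<Sum>j\<in>J. \<Sum>k\<in>K. \<Sum>l\<in>L. g i j k l) =
   (\<Sum>l\<in>L. \<Sum>i\<in>I. \<Sum>j\<in>J. \<Sum>k\<in>K. (g i j k l :: 'a::comm_monoid_add))"
  by (subst sum.swap) (rule sum.cong[OF refl], rule sum_rotate3)

lemma sum_rotate6_3:
  "(\<Sum>i\<in>I. \<Sum>j\<in>J. \<Sum>k\<in>K. \<Sum>l\<in>L. \<Sum>m\<in>M. \<Sum>n\<in>N. g i j k l m n) =
   (\<Sum>l\<in>L. \<Sum>m\<in>M. \<Sum>n\<in>N. \<Sum>i\<in>I. \<Sum>j\<in>J. \<Sum>k\<in>K. (g i j k l m n :: 'a::comm_monoid_add))"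
  by (subst sum_rotate4) (rule sum.cong[OF refl], subst sum_rotate4,
      rule sum.cong[OF refl], rule sum_rotate4)

type_synonym mat = "nat \<Rightarrow> nat \<Rightarrow> real"

definition mat_mul :: "nat \<Rightarrow> mat \<Rightarrow> mat \<Rightarrow> mat" where
  "mat_mul n X Y i j = (\<Sum>k<n. X i k * Y k j)"

definition is_right_inverse :: "nat \<Rightarrow> mat \<Rightarrow> mat \<Rightarrow> bool" where
  "is_right_inverse n X Y \<longleftrightarrow> (\<forall>i<n. \<forall>j<n. mat_mul n X Y i j = (if i = j then 1 else 0))"

lemma mat_mul_assoc: "mat_mul n (mat_mul n X Y) Z = mat_mul n X (mat_mul n Y Z)"
proof (intro ext)
  fix i j
  have "mat_mul n (mat_mul n X Y) Z i j = (\<Sum>k<n. \<Sum>l<n. X i l * Y l k * Z k j)"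
    by (simp add: mat_mul_def sum_distrib_right)
  also have "\<dots> = (\<Sum>l<n. \<Sum>k<n. X i l * Y l k * Z k j)"
    by (rule sum.swap)
  also have "\<dots> = mat_mul n X (mat_mul n Y Z) i j"
    by (simp add: mat_mul_def sum_distrib_left mult_ac)
  finally show "mat_mul n (mat_mul n X Y) Z i j = mat_mul n X (mat_mul n Y Z) i j" .
qed

lemma mat_mul_transpose: "mat_mul n (\<lambda>i j. X j i) (\<lambda>i j. Y j i) i j = mat_mul n Y X j i"
  by (simp add: mat_mul_def mult.commute)

lemma mat_mul_id_left:
  assumes "\<forall>i<n. \<forall>j<n. E i j = (if i = j then 1 else 0)" and "i < n"
  shows "mat_mul n E Y i j = Y i j"
proof -
  have "mat_mul n E Y i j = (\<Sum>k<n. if i = k then Y k j else 0)"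
    unfolding mat_mul_def using assms by (intro sum.cong) auto
  then show ?thesis
    using \<open>i < n\<close> by simp
qed

lemma is_right_inverse_mat_mul:
  assumes "is_right_inverse n X X'" and "is_right_inverse n Y Y'"
  shows "is_right_inverse n (mat_mul n X Y) (mat_mul n Y' X')"
  unfolding is_right_inverse_def
proof (intro allI impI)
  fix i j assume "i < n" "j < n"
  have "mat_mul n (mat_mul n X Y) (mat_mul n Y' X') i j = mat_mul n X (mat_mul n (mat_mul n Y Y') X') i j"
    by (simp add: mat_mul_assoc)
  also have "\<dots> = mat_mul n X X' i j"
    unfolding mat_mul_def[of n X]
  proof (intro sum.cong refl)
    fix k assume "k \<in> {..<n}"
    then show "X i k * mat_mul n (mat_mul n Y Y') X' k j = X i k * X' k j"
      using assms(2) mat_mul_id_left[of n "mat_mul n Y Y'" k X' j]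
      by (simp add: is_right_inverse_def)
  qed
  finally show "mat_mul n (mat_mul n X Y) (mat_mul n Y' X') i j = (if i = j then 1 else 0)"
    using assms(1) \<open>i < n\<close> \<open>j < n\<close> by (simp add: is_right_inverse_def)
qed

lemma is_right_inverse_transpose:
  "is_right_inverse n X Y \<Longrightarrow> is_right_inverse n (\<lambda>i j. Y j i) (\<lambda>i j. X j i)"
  unfolding is_right_inverse_def mat_mul_transpose[of n Y X] by auto

text \<open>Structure constants of \<open>c\<close> in the basis \<open>e'\<^sub>i = \<Sum>\<^sub>k P k i e\<^sub>k\<close>, where \<open>Q = P\<^sup>-\<^sup>1\<close>;
  \<open>pullback\<close> gives the coefficients of \<open>[e'\<^sub>i, e'\<^sub>j]\<close> in the old basis.\<close>

definition change_basis :: "nat \<Rightarrow> mat \<Rightarrow> mat \<Rightarrow> sc \<Rightarrow> sc" where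
  "change_basis n P Q c i j m = (\<Sum>k<n. \<Sum>l<n. \<Sum>p<n. P k i * P l j * c k l p * Q m p)"

definition pullback :: "nat \<Rightarrow> mat \<Rightarrow> sc \<Rightarrow> sc" where
  "pullback n P c i j p = (\<Sum>k<n. \<Sum>l<n. P k i * P l j * c k l p)"

lemma change_basis_cong:
  assumes "\<And>i j k. i < n \<Longrightarrow> j < n \<Longrightarrow> k < n \<Longrightarrow> c i j k = c' i j k"
  shows "change_basis n P Q c = change_basis n P Q c'"
  by (simp add: fun_eq_iff change_basis_def assms)

lemma change_basis_comp:
  "change_basis n P Q (change_basis n P' Q' c) = change_basis n (mat_mul n P' P) (mat_mul n Q Q') c"
proof (intro ext)
  fix i j m
  have "change_basis n P Q (change_basis n P' Q' c) i j m =
    (\<Sum>k<n. \<Sum>l<n. \<Sum>p<n. \<Sum>a<n. \<Sum>b<n. \<Sum>d<n.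
        P k i * P l j * (P' a k * P' b l * c a b d * Q' p d) * Q m p)"
    by (simp add: change_basis_def sum_distrib_left sum_distrib_right)
  also have "\<dots> = (\<Sum>a<n. \<Sum>b<n. \<Sum>d<n. \<Sum>k<n. \<Sum>l<n. \<Sum>p<n.
        P k i * P l j * (P' a k * P' b l * c a b d * Q' p d) * Q m p)"
    by (rule sum_rotate6_3)
  also have "\<dots> = (\<Sum>a<n. \<Sum>b<n. \<Sum>d<n. \<Sum>l<n. \<Sum>k<n. \<Sum>p<n.
        P k i * P l j * (P' a k * P' b l * c a b d * Q' p d) * Q m p)"
    by (intro sum.cong refl sum.swap)
  also have "\<dots> = change_basis n (mat_mul n P' P) (mat_mul n Q Q') c i j m"
    by (simp add: change_basis_def mat_mul_def sum_distrib_left sum_distrib_right mult_ac)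
  finally show "change_basis n P Q (change_basis n P' Q' c) i j m =
    change_basis n (mat_mul n P' P) (mat_mul n Q Q') c i j m" .
qed

lemma change_basis_undo:
  assumes "is_right_inverse n A B" and "i < n" "j < n" "m < n"
  shows "change_basis n B A (change_basis n A B c) i j m = c i j m"
proof -
  have E: "mat_mul n A B k l = of_bool (k = l)" if "k < n" "l < n" for k l
    using assms(1) that by (simp add: is_right_inverse_def)
  have "change_basis n B A (change_basis n A B c) i j m =
    (\<Sum>k<n. of_bool (k = i) * (\<Sum>l<n. of_bool (l = j) * (\<Sum>p<n. of_bool (m = p) * c k l p)))"
    unfolding change_basis_comp change_basis_def sum_distrib_left
    using assms(2-4) by (intro sum.cong refl) (simp add: E mult_ac)
  also have "\<dots> = c i j m"
    using assms(2-4) by (simp add: Int_absorb1)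
  finally show ?thesis .
qed

lemma change_basis_eq_pullback: "change_basis n P Q c i j m = (\<Sum>p<n. pullback n P c i j p * Q m p)"
  unfolding change_basis_def pullback_def by (subst sum_rotate3) (simp add: sum_distrib_right)

lemma change_basis_contract:
  assumes "is_right_inverse n P Q" and "p < n"
  shows "(\<Sum>m<n. change_basis n P Q c i j m * P p m) = pullback n P c i j p"
proof -
  have E: "mat_mul n P Q p q = of_bool (p = q)" if "q < n" for q
    using assms that by (simp add: is_right_inverse_def)
  have "(\<Sum>m<n. change_basis n P Q c i j m * P p m) =
    (\<Sum>q<n. pullback n P c i j q * mat_mul n P Q p q)"
    unfolding change_basis_eq_pullback mat_mul_def sum_distrib_right sum_distrib_left
    by (subst sum.swap) (simp add: mult_ac)
  also have "\<dots> = (\<Sum>q<n. of_bool (p = q) * pullback n P c i j q)"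
    by (intro sum.cong refl) (simp add: E)
  also have "\<dots> = pullback n P c i j p"
    using assms(2) by (simp add: Int_absorb1)
  finally show ?thesis .
qed

definition iter_bracket :: "nat \<Rightarrow> sc \<Rightarrow> nat \<Rightarrow> nat \<Rightarrow> nat \<Rightarrow> nat \<Rightarrow> real" where
  "iter_bracket n c i j k m = (\<Sum>l<n. c i j l * c l k m)"

lemma lie_sc_iff_iter_bracket:
  "lie_sc n c \<longleftrightarrow>
     (\<forall>i<n. \<forall>j<n. \<forall>k<n. c i j k = - c j i k) \<and>
     (\<forall>i<n. \<forall>j<n. \<forall>k<n. \<forall>m<n.
        iter_bracket n c i j k m + iter_bracket n c j k i m + iter_bracket n c k i j m = 0)"
  by (simp add: lie_sc_def iter_bracket_def sum.distrib)

lemma lie_sc_cong: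
  assumes "\<And>i j k. i < n \<Longrightarrow> j < n \<Longrightarrow> k < n \<Longrightarrow> c' i j k = c i j k"
  shows "lie_sc n c' \<longleftrightarrow> lie_sc n c"
  unfolding lie_sc_def by (simp add: assms)

lemma iter_bracket_change_basis:
  assumes "is_right_inverse n P Q"
  shows "iter_bracket n (change_basis n P Q c) i j k m =
    (\<Sum>d<n. Q m d * (\<Sum>u<n. \<Sum>v<n. \<Sum>w<n. P u i * P v j * P w k * iter_bracket n c u v w d))"
proof -
  let ?T = "change_basis n P Q c"
  have "iter_bracket n ?T i j k m =
    (\<Sum>l<n. \<Sum>a<n. \<Sum>b<n. \<Sum>d<n. ?T i j l * P a l * (P b k * c a b d * Q m d))"
    by (simp add: iter_bracket_def change_basis_def[of n P Q c _ k m] sum_distrib_left mult_ac)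
  also have "\<dots> = (\<Sum>a<n. \<Sum>b<n. \<Sum>d<n. (\<Sum>l<n. ?T i j l * P a l) * (P b k * c a b d * Q m d))"
    by (subst sum_rotate4[symmetric]) (simp add: sum_distrib_right)
  also have "\<dots> = (\<Sum>a<n. \<Sum>b<n. \<Sum>d<n. pullback n P c i j a * (P b k * c a b d * Q m d))"
    using change_basis_contract[OF assms] by simp
  also have "\<dots> = (\<Sum>d<n. Q m d * (\<Sum>a<n. \<Sum>b<n. \<Sum>u<n. \<Sum>v<n.
      P u i * P v j * P b k * (c u v a * c a b d)))"
    by (subst sum_rotate3) (simp add: pullback_def sum_distrib_left sum_distrib_right mult_ac)
  also have "\<dots> = (\<Sum>d<n. Q m d * (\<Sum>u<n. \<Sum>v<n. \<Sum>w<n. P u i * P v j * P w k * iter_bracket n c u v w d))"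
    unfolding iter_bracket_def sum_distrib_left
    by (subst (2) sum_rotate4, subst (2) sum_rotate4) (intro sum.cong refl sum.swap)
  finally show ?thesis .
qed

lemma sum_cyclic_relabel:
  "(\<Sum>u<n. \<Sum>v<n. \<Sum>w<n. P u j * P v k * P w i * S u v w) =
   (\<Sum>u<n. \<Sum>v<n. \<Sum>w<n. P u i * P v j * P w k * (S v w u :: real))"
  by (subst sum_rotate3) (simp add: mult_ac)

lemma lie_sc_change_basis:
  assumes lie: "lie_sc n c" and inv: "is_right_inverse n P Q"
  shows "lie_sc n (change_basis n P Q c)"
  unfolding lie_sc_iff_iter_bracket
proof (intro conjI allI impI)
  fix i j k
  have "P l j * P k' i * c l k' p * Q k p = - (P k' i * P l j * c k' l p * Q k p)"
    if "k' < n" "l < n" "p < n" for k' l p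
  proof -
    have "c l k' p = - c k' l p"
      using lie that unfolding lie_sc_def by blast
    then show ?thesis by simp
  qed
  then have "change_basis n P Q c j i k = (\<Sum>k'<n. \<Sum>l<n. \<Sum>p<n. - (P k' i * P l j * c k' l p * Q k p))"
    unfolding change_basis_def by (subst sum.swap) (intro sum.cong refl; simp)
  then show "change_basis n P Q c i j k = - change_basis n P Q c j i k"
    by (simp add: change_basis_def sum_negf)
next
  fix i j k m
  define K where "K i j k d = (\<Sum>u<n. \<Sum>v<n. \<Sum>w<n. P u i * P v j * P w k * iter_bracket n c u v w d)"
    for i j k d
  have K_cyclic: "K i j k d + K j k i d + K k i j d =
    (\<Sum>u<n. \<Sum>v<n. \<Sum>w<n. P u i * P v j * P w k *
       (iter_bracket n c u v w d + iter_bracket n c v w u d + iter_bracket n c w u v d))" for d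
  proof -
    have "K j k i d = (\<Sum>u<n. \<Sum>v<n. \<Sum>w<n. P u i * P v j * P w k * iter_bracket n c v w u d)"
      unfolding K_def by (rule sum_cyclic_relabel)
    moreover have "K k i j d = (\<Sum>u<n. \<Sum>v<n. \<Sum>w<n. P u i * P v j * P w k * iter_bracket n c w u v d)"
      unfolding K_def by (rule trans[OF sum_cyclic_relabel sum_cyclic_relabel])
    ultimately show ?thesis
      by (simp add: K_def sum.distrib[symmetric] distrib_left)
  qed
  have "K i j k d + K j k i d + K k i j d = 0" if "d < n" for d
    unfolding K_cyclic using lie that unfolding lie_sc_iff_iter_bracket
    by (intro sum.neutral ballI) simp
  then show "iter_bracket n (change_basis n P Q c) i j k m + iter_bracket n (change_basis n P Q c) j k i m +
      iter_bracket n (change_basis n P Q c) k i j m = 0"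
    by (simp add: iter_bracket_change_basis[OF inv] K_def[symmetric] distrib_left[symmetric] sum.distrib[symmetric])
qed

section \<open>Manin triples under change of basis\<close>

lemma inv3_iff_right_inverse: "inv3 A B \<longleftrightarrow> is_right_inverse 3 A B \<and> is_right_inverse 3 B A"
  by (simp add: inv3_def is_right_inverse_def mat_mul_def)

lemma trans_G_eq_change_basis: "trans_G A B = change_basis 3 A B"
  by (simp add: fun_eq_iff trans_G_def change_basis_def)

lemma trans_Gt_eq_change_basis: "trans_Gt A B = change_basis 3 (\<lambda>i j. B j i) (\<lambda>i j. A j i)"
  by (simp add: fun_eq_iff trans_Gt_def change_basis_def mult_ac)

lemma trans_G_undo:
  assumes "inv3 A B" and "i < 3" "j < 3" "n < 3"
  shows "trans_G B A (trans_G A B f) i j n = f i j n"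
  using assms unfolding trans_G_eq_change_basis inv3_iff_right_inverse
  by (blast intro: change_basis_undo)

lemma trans_Gt_undo:
  assumes "inv3 A B" and "i < 3" "j < 3" "n < 3"
  shows "trans_Gt B A (trans_Gt A B ft) i j n = ft i j n"
proof -
  have AB: "is_right_inverse 3 A B"
    using assms(1) by (simp add: inv3_iff_right_inverse)
  show ?thesis
    unfolding trans_Gt_eq_change_basis
    by (rule change_basis_undo[OF is_right_inverse_transpose[OF AB] assms(2-4)])
qed

lemma trans_G_hom:
  assumes "inv3 A B" and "\<forall>i<3. \<forall>j<3. \<forall>n<3. g i j n = trans_G A B f i j n"
    and "i < 3" "j < 3" "p < 3"
  shows "(\<Sum>m<3. A p m * g i j m) = (\<Sum>k<3. \<Sum>l<3. A k i * A l j * f k l p)"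
proof -
  have AB: "is_right_inverse 3 A B"
    using assms(1) by (simp add: inv3_iff_right_inverse)
  have "(\<Sum>m<3. A p m * g i j m) = (\<Sum>m<3. change_basis 3 A B f i j m * A p m)"
    using assms(2-4) by (intro sum.cong) (auto simp: trans_G_eq_change_basis)
  also have "\<dots> = pullback 3 A f i j p"
    by (rule change_basis_contract[OF AB assms(5)])
  finally show ?thesis
    by (simp add: pullback_def)
qed

lemma trans_Gt_hom:
  assumes "inv3 A B" and "\<forall>i<3. \<forall>j<3. \<forall>n<3. gt i j n = trans_Gt A B ft i j n"
    and "i < 3" "j < 3" "p < 3"
  shows "(\<Sum>m<3. A m p * ft i j m) = (\<Sum>k<3. \<Sum>l<3. A i k * A j l * gt k l p)"
proof -
  have BA: "is_right_inverse 3 B A"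
    using assms(1) by (simp add: inv3_iff_right_inverse)
  have "trans_Gt B A gt = trans_Gt B A (trans_Gt A B ft)"
    unfolding trans_Gt_eq_change_basis
    using assms(2) by (intro change_basis_cong) (auto simp: trans_Gt_eq_change_basis)
  then have "ft i j m = change_basis 3 (\<lambda>i j. A j i) (\<lambda>i j. B j i) gt i j m" if "m < 3" for m
    using trans_Gt_undo[OF assms(1) assms(3,4) that] by (simp add: trans_Gt_eq_change_basis)
  then have "(\<Sum>m<3. A m p * ft i j m) =
      (\<Sum>m<3. change_basis 3 (\<lambda>i j. A j i) (\<lambda>i j. B j i) gt i j m * A m p)"
    by (intro sum.cong) auto
  also have "\<dots> = pullback 3 (\<lambda>i j. A j i) gt i j p"
    by (rule change_basis_contract[OF is_right_inverse_transpose[OF BA] assms(5)])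
  finally show ?thesis
    by (simp add: pullback_def)
qed

lemma less_6_cases: "(i::nat) < 6 \<Longrightarrow> i < 3 \<or> (\<exists>i'. i = i' + 3 \<and> i' < 3)"
  by presburger

lemma sum_lessThan_3: "(\<Sum>k<(3::nat). g k) = g 0 + g 1 + (g 2 :: real)"
  by (simp add: eval_nat_numeral)

lemma sum_lessThan_6: "(\<Sum>k<(6::nat). g k) = g 0 + g 1 + g 2 + g 3 + g 4 + (g 5 :: real)"
  by (simp add: eval_nat_numeral)

lemma all_less_3: "(\<forall>i<(3::nat). P i) \<longleftrightarrow> P 0 \<and> P 1 \<and> P 2"
  unfolding numeral_3_eq_3 numeral_2_eq_2 by (auto simp: less_Suc_eq)

definition block_diag :: "mat \<Rightarrow> mat \<Rightarrow> mat" where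
  "block_diag X Y k i =
     (if k < 3 \<and> i < 3 then X k i
      else if 3 \<le> k \<and> k < 6 \<and> 3 \<le> i \<and> i < 6 then Y (k - 3) (i - 3) else 0)"

lemma is_right_inverse_block_diag:
  assumes "is_right_inverse 3 X X'" and "is_right_inverse 3 Y Y'"
  shows "is_right_inverse 6 (block_diag X Y) (block_diag X' Y')"
  unfolding is_right_inverse_def
proof (intro allI impI)
  fix i j :: nat assume "i < 6" "j < 6"
  have "Z i 0 * Z' 0 j + Z i (Suc 0) * Z' (Suc 0) j + Z i 2 * Z' 2 j = (if i = j then 1 else 0)"
    if "is_right_inverse 3 Z Z'" "i < 3" "j < 3" for Z Z' i j
    using that by (simp add: is_right_inverse_def mat_mul_def sum_lessThan_3)
  note blocks = this[OF assms(1)] this[OF assms(2)]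
  show "mat_mul 6 (block_diag X Y) (block_diag X' Y') i j = (if i = j then 1 else 0)"
    using less_6_cases[OF \<open>i < 6\<close>] less_6_cases[OF \<open>j < 6\<close>]
    by (elim disjE exE conjE; simp add: mat_mul_def sum_lessThan_6 block_diag_def blocks)
qed

lemma double_sc_change_basis:
  assumes "i < 6" "j < 6" "m < 6"
  shows "double_sc (trans_G A B f) (trans_Gt A B ft) i j m =
    change_basis 6 (block_diag A (\<lambda>i j. B j i)) (block_diag B (\<lambda>i j. A j i)) (double_sc f ft) i j m"
  using less_6_cases[OF assms(1)] less_6_cases[OF assms(2)] less_6_cases[OF assms(3)]
  by (elim disjE exE conjE; simp add: double_sc_def trans_G_def trans_Gt_def change_basis_def
      block_diag_def sum_lessThan_6 sum_lessThan_3 algebra_simps)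

lemma manin_cong:
  assumes "\<And>i j k. i < 3 \<Longrightarrow> j < 3 \<Longrightarrow> k < 3 \<Longrightarrow> f' i j k = f i j k"
    and "\<And>i j k. i < 3 \<Longrightarrow> j < 3 \<Longrightarrow> k < 3 \<Longrightarrow> ft' i j k = ft i j k"
  shows "manin f' ft' \<longleftrightarrow> manin f ft"
proof -
  have "double_sc f' ft' i j k = double_sc f ft i j k" if "i < 6" "j < 6" "k < 6" for i j k
    using less_6_cases[OF that(1)] less_6_cases[OF that(2)] less_6_cases[OF that(3)]
    by (elim disjE exE conjE; simp add: double_sc_def assms)
  then have "lie_sc 6 (double_sc f' ft') \<longleftrightarrow> lie_sc 6 (double_sc f ft)"
    by (rule lie_sc_cong)
  moreover have "lie_sc 3 f' \<longleftrightarrow> lie_sc 3 f" "lie_sc 3 ft' \<longleftrightarrow> lie_sc 3 ft"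
    using lie_sc_cong[of 3 f' f] lie_sc_cong[of 3 ft' ft] assms by blast+
  ultimately show ?thesis
    by (simp add: manin_def)
qed

lemma manin_change_basis:
  assumes "manin f ft" and "inv3 A B"
  shows "manin (trans_G A B f) (trans_Gt A B ft)"
proof -
  have AB: "is_right_inverse 3 A B"
    using assms(2) by (simp add: inv3_iff_right_inverse)
  note BA_transpose = is_right_inverse_transpose[OF AB]
  have "lie_sc 6 (change_basis 6 (block_diag A (\<lambda>i j. B j i)) (block_diag B (\<lambda>i j. A j i)) (double_sc f ft))"
    using assms(1) is_right_inverse_block_diag[OF AB BA_transpose]
    by (simp add: manin_def lie_sc_change_basis)
  moreover have "lie_sc 6 (double_sc (trans_G A B f) (trans_Gt A B ft)) \<longleftrightarrow>
      lie_sc 6 (change_basis 6 (block_diag A (\<lambda>i j. B j i)) (block_diag B (\<lambda>i j. A j i)) (double_sc f ft))"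
    by (rule lie_sc_cong) (rule double_sc_change_basis)
  moreover have "lie_sc 3 (trans_G A B f)" "lie_sc 3 (trans_Gt A B ft)"
    using assms(1) lie_sc_change_basis[OF _ AB] lie_sc_change_basis[OF _ BA_transpose]
    by (simp_all add: manin_def trans_G_eq_change_basis trans_Gt_eq_change_basis)
  ultimately show ?thesis
    by (simp add: manin_def)
qed

lemma manin_iso_sym:
  assumes "manin_iso f ft g gt"
  shows "manin_iso g gt f ft"
proof -
  obtain A B where inv: "inv3 A B"
    and g: "\<forall>i<3. \<forall>j<3. \<forall>n<3. g i j n = trans_G A B f i j n \<and> gt i j n = trans_Gt A B ft i j n"
    using assms unfolding manin_iso_def by blast
  have "inv3 B A"
    using inv by (simp add: inv3_def)
  have "trans_G B A g = trans_G B A (trans_G A B f)"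
    unfolding trans_G_eq_change_basis using g by (intro change_basis_cong) (auto simp: trans_G_eq_change_basis)
  moreover have "trans_Gt B A gt = trans_Gt B A (trans_Gt A B ft)"
    unfolding trans_Gt_eq_change_basis using g by (intro change_basis_cong) (auto simp: trans_Gt_eq_change_basis)
  ultimately have "\<forall>i<3. \<forall>j<3. \<forall>n<3. f i j n = trans_G B A g i j n \<and> ft i j n = trans_Gt B A gt i j n"
    by (simp add: trans_G_undo[OF inv] trans_Gt_undo[OF inv])
  with \<open>inv3 B A\<close> show ?thesis
    unfolding manin_iso_def by blast
qed

lemma manin_iso_trans:
  assumes "manin_iso f ft g gt" and "manin_iso g gt h ht"
  shows "manin_iso f ft h ht"
proof -
  obtain A B where inv: "inv3 A B"
    and g: "\<forall>i<3. \<forall>j<3. \<forall>n<3. g i j n = trans_G A B f i j n \<and> gt i j n = trans_Gt A B ft i j n"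
    using assms(1) unfolding manin_iso_def by blast
  obtain A' B' where inv': "inv3 A' B'"
    and h: "\<forall>i<3. \<forall>j<3. \<forall>n<3. h i j n = trans_G A' B' g i j n \<and> ht i j n = trans_Gt A' B' gt i j n"
    using assms(2) unfolding manin_iso_def by blast
  have "trans_G A' B' g = trans_G (mat_mul 3 A A') (mat_mul 3 B' B) f"
    unfolding trans_G_eq_change_basis
    using g by (subst change_basis_cong[of 3 g "trans_G A B f"]) (auto simp: trans_G_eq_change_basis change_basis_comp)
  moreover have "trans_Gt A' B' gt = trans_Gt (mat_mul 3 A A') (mat_mul 3 B' B) ft"
  proof -
    have "trans_Gt A' B' gt = change_basis 3 (mat_mul 3 (\<lambda>i j. B j i) (\<lambda>i j. B' j i))
        (mat_mul 3 (\<lambda>i j. A' j i) (\<lambda>i j. A j i)) ft"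
      unfolding trans_Gt_eq_change_basis
      using g by (subst change_basis_cong[of 3 gt "trans_Gt A B ft"]) (auto simp: trans_Gt_eq_change_basis change_basis_comp)
    moreover have "mat_mul 3 (\<lambda>i j. B j i) (\<lambda>i j. B' j i) = (\<lambda>i j. mat_mul 3 B' B j i)"
      "mat_mul 3 (\<lambda>i j. A' j i) (\<lambda>i j. A j i) = (\<lambda>i j. mat_mul 3 A A' j i)"
      by (intro ext mat_mul_transpose)+
    ultimately show ?thesis
      unfolding trans_Gt_eq_change_basis by simp
  qed
  moreover have "inv3 (mat_mul 3 A A') (mat_mul 3 B' B)"
    using inv inv' unfolding inv3_iff_right_inverse by (blast intro: is_right_inverse_mat_mul)
  ultimately show ?thesis
    unfolding manin_iso_def using h by (intro exI[of _ "mat_mul 3 A A'"] exI[of _ "mat_mul 3 B' B"]) simp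
qed

lemma manin_iso_cong_right:
  assumes "manin_iso f ft g gt" and "\<And>i j k. i < 3 \<Longrightarrow> j < 3 \<Longrightarrow> k < 3 \<Longrightarrow> gt' i j k = gt i j k"
  shows "manin_iso f ft g gt'"
  using assms unfolding manin_iso_def by auto

lemma manin_iso_manin:
  assumes "manin_iso f ft g gt" and "manin g gt"
  shows "manin f ft"
proof -
  obtain B A where "inv3 B A"
    and f: "\<forall>i<3. \<forall>j<3. \<forall>n<3. f i j n = trans_G B A g i j n \<and> ft i j n = trans_Gt B A gt i j n"
    using manin_iso_sym[OF assms(1)] unfolding manin_iso_def by blast
  then have "manin (trans_G B A g) (trans_Gt B A gt)"
    using assms(2) by (simp add: manin_change_basis)
  then show ?thesis
    using manin_cong[of f "trans_G B A g" ft "trans_Gt B A gt"] f by simp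
qed

lemma lie_iso3_manin_iso:
  assumes "lie_iso3 f g" and "manin g gt"
  shows "\<exists>ft. manin f ft \<and> manin_iso f ft g gt"
proof -
  obtain A B where inv: "inv3 A B" and g: "\<forall>i<3. \<forall>j<3. \<forall>n<3. g i j n = trans_G A B f i j n"
    using assms(1) unfolding lie_iso3_def by blast
  have "inv3 B A"
    using inv by (simp add: inv3_def)
  then have "manin_iso f (trans_Gt B A gt) g gt"
    unfolding manin_iso_def using inv g trans_Gt_undo by metis
  then show ?thesis
    using manin_iso_manin assms(2) by blast
qed

section \<open>Normal form of the dual of \<open>VII\<^sub>a\<close>\<close>

text \<open>Case (c) of the theorem is \<open>dual_normal a 0 s\<close> with \<open>b = - a s\<close>; cases (a) and (b) are
  \<open>s = 0\<close> with \<open>p1 \<in> {0, 1, -1}\<close>.\<close>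

definition dual_normal :: "real \<Rightarrow> real \<Rightarrow> real \<Rightarrow> sc" where
  "dual_normal a p1 s = sc_of (vec3 0 s (-a*s)) (vec3 p1 0 0) (vec3 0 (-a*s) (-s))"

definition normal_params :: "real \<Rightarrow> real \<Rightarrow> bool" where
  "normal_params p1 s \<longleftrightarrow> (s = 0 \<and> (p1 = 0 \<or> p1 = 1 \<or> p1 = -1)) \<or> (s \<noteq> 0 \<and> p1 = 0)"

lemma canonical_dual_iff:
  assumes "a > 0"
  shows "canonical_dual a ft \<longleftrightarrow> (\<exists>p1 s. normal_params p1 s \<and> ft = dual_normal a p1 s)"
proof
  assume "canonical_dual a ft"
  then consider "ft = dual_normal a 0 0" | "ft = dual_normal a 1 0" | "ft = dual_normal a (-1) 0"
    | b where "b \<noteq> 0" "ft = dual_normal a 0 (-(b/a))"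
    using assms unfolding canonical_dual_def dual_normal_def by auto
  then show "\<exists>p1 s. normal_params p1 s \<and> ft = dual_normal a p1 s"
    by cases (use assms in \<open>auto simp: normal_params_def\<close>)
next
  assume "\<exists>p1 s. normal_params p1 s \<and> ft = dual_normal a p1 s"
  then obtain p1 s where "normal_params p1 s" "ft = dual_normal a p1 s"
    by blast
  then show "canonical_dual a ft"
    unfolding normal_params_def canonical_dual_def dual_normal_def
    using assms by (auto intro!: exI[of _ "-a*s"])
qed

lemma sc_of_components:
  assumes "\<forall>i<3. \<forall>j<3. \<forall>k<3. g i j k = - g j i k" and "i < 3" "j < 3" "k < 3"
  shows "sc_of (vec3 (g 0 1 0) (g 0 1 1) (g 0 1 2)) (vec3 (g 1 2 0) (g 1 2 1) (g 1 2 2))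
      (vec3 (g 2 0 0) (g 2 0 1) (g 2 0 2)) i j k = g i j k"
proof -
  have anti: "g i j k = - g j i k" if "i < 3" "j < 3" "k < 3" for i j k
    using assms(1) that by blast
  have diag: "g i i k = 0" if "i < 3" "k < 3" for i k
    using anti[of i i k] that by simp
  have cases3: "x = 0 \<or> x = 1 \<or> x = 2" if "x < 3" for x :: nat
    using that by auto
  show ?thesis
    using cases3[OF assms(2)] cases3[OF assms(3)] cases3[OF assms(4)]
    by (elim disjE; simp add: sc_of_def vec3_def diag anti[of "Suc 0" 0] anti[of 2 "Suc 0"] anti[of 0 2])
qed

lemma manin_bianchi7_dual_eqs:
  assumes "manin (bianchi7 a) (sc_of (vec3 r1 r2 r3) (vec3 p1 p2 p3) (vec3 q1 q2 q3))"
  shows "r3 = q3 * a" "- r2 = q3" "r1 + p3 - a * q1 + a * p2 = 0" "q1 + p2 + a * r1 = a * p3"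
    "q2 = q3 * a" "r2 * p1 - p2 * r1 + (p3 * q1 - q3 * p1) = 0"
proof -
  let ?D = "double_sc (bianchi7 a) (sc_of (vec3 r1 r2 r3) (vec3 p1 p2 p3) (vec3 q1 q2 q3))"
  have J: "(\<Sum>l<6. ?D i j l * ?D l k m + ?D j k l * ?D l i m + ?D k i l * ?D l j m) = 0"
    if "i < 6" "j < 6" "k < 6" "m < 6" for i j k m
    using assms that unfolding manin_def lie_sc_def by blast
  \<comment> \<open>the Jacobi identities for \<open>X\<^sub>i, X\<^sub>j, X~\<^sup>k\<close> and for \<open>X~\<^sup>1, X~\<^sup>2, X~\<^sup>3\<close>\<close>
  show "r3 = q3 * a" "- r2 = q3" "r1 + p3 - a * q1 + a * p2 = 0" "q1 + p2 + a * r1 = a * p3"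
    "q2 = q3 * a" "r2 * p1 - p2 * r1 + (p3 * q1 - q3 * p1) = 0"
    using J[of 0 1 3 0] J[of 0 1 3 1] J[of 0 1 3 2] J[of 0 1 4 0] J[of 0 1 4 1] J[of 0 1 4 2]
      J[of 0 1 5 0] J[of 0 1 5 1] J[of 0 1 5 2] J[of 0 2 3 0] J[of 0 2 3 1] J[of 0 2 3 2]
      J[of 0 2 4 0] J[of 0 2 4 1] J[of 0 2 4 2] J[of 0 2 5 0] J[of 0 2 5 1] J[of 0 2 5 2]
      J[of 1 2 3 0] J[of 1 2 3 1] J[of 1 2 3 2] J[of 1 2 4 0] J[of 1 2 4 1] J[of 1 2 4 2]
      J[of 1 2 5 0] J[of 1 2 5 1] J[of 1 2 5 2] J[of 3 4 5 3] J[of 3 4 5 4] J[of 3 4 5 5]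
    by (simp_all add: sum_lessThan_6 double_sc_def bianchi7_def sc_of_def vec3_def)
qed

definition dual_general :: "real \<Rightarrow> real \<Rightarrow> real \<Rightarrow> real \<Rightarrow> real \<Rightarrow> sc" where
  "dual_general a p1 q1 r1 s = sc_of (vec3 r1 s (-a*s))
     (vec3 p1 (((a^2-1)*q1 - 2*a*r1)/(1+a^2)) ((2*a*q1 + (a^2-1)*r1)/(1+a^2)))
     (vec3 q1 (-a*s) (-s))"

lemma manin_bianchi7_dual_general:
  fixes a :: real
  assumes "manin (bianchi7 a) (sc_of (vec3 r1 s r3) (vec3 p1 p2 p3) (vec3 q1 q2 q3))"
  shows "sc_of (vec3 r1 s r3) (vec3 p1 p2 p3) (vec3 q1 q2 q3) = dual_general a p1 q1 r1 s"
    and "s * p1 * (1 + a^2) + a * (q1^2 + r1^2) = 0"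
proof -
  note eqs = manin_bianchi7_dual_eqs[OF assms]
  have k: "1 + a^2 \<noteq> 0"
    by (metis add_pos_nonneg zero_less_one zero_le_power2 less_irrefl)
  have p3: "p3 = a * q1 - a * p2 - r1"
    using eqs(3) by (simp add: algebra_simps)
  have p2k: "p2 * (1 + a^2) = (a^2 - 1) * q1 - 2 * a * r1"
    using eqs(4) unfolding p3 by (simp add: algebra_simps power2_eq_square)
  have p3k: "p3 * (1 + a^2) = 2 * a * q1 + (a^2 - 1) * r1"
    using p2k unfolding p3 by algebra
  have p2: "p2 = ((a^2 - 1) * q1 - 2 * a * r1) / (1 + a^2)"
    using p2k k by (simp add: eq_divide_eq)
  have p3': "p3 = (2 * a * q1 + (a^2 - 1) * r1) / (1 + a^2)"
    using p3k k by (simp add: eq_divide_eq)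
  have "sc_of (vec3 r1 s r3) (vec3 p1 p2 p3) (vec3 q1 q2 q3) =
      sc_of (vec3 r1 s (-a*s)) (vec3 p1 p2 p3) (vec3 q1 (-a*s) (-s))"
  proof -
    have "q3 = -s" "r3 = -a*s" "q2 = -a*s"
      using eqs(1,2,5) by auto
    then show ?thesis
      by simp
  qed
  also have "\<dots> = dual_general a p1 q1 r1 s"
    unfolding dual_general_def p2 p3' ..
  finally show "sc_of (vec3 r1 s r3) (vec3 p1 p2 p3) (vec3 q1 q2 q3) = dual_general a p1 q1 r1 s" .
  have "2 * (s * p1 * (1 + a^2) + a * (q1^2 + r1^2)) =
      (1 + a^2) * (s * p1 - p2 * r1 + (p3 * q1 - q3 * p1))"
    using p2k p3k eqs(2) by algebra
  then show "s * p1 * (1 + a^2) + a * (q1^2 + r1^2) = 0"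
    using eqs(6) by simp
qed

definition dual_translated :: "real \<Rightarrow> real \<Rightarrow> real \<Rightarrow> real \<Rightarrow> sc" where
  "dual_translated a s v2 v3 = sc_of (vec3 (s*(a*v3-v2)) s (-a*s))
     (vec3 (-a*s*(v2^2+v3^2)) (s*(a*v2-v3)) (s*(v2+a*v3)))
     (vec3 (s*(a*v2+v3)) (-a*s) (-s))"

definition mat3 :: "real \<Rightarrow> real \<Rightarrow> real \<Rightarrow> real \<Rightarrow> real \<Rightarrow> real \<Rightarrow> real \<Rightarrow> real \<Rightarrow> real \<Rightarrow> mat" where
  "mat3 c00 c01 c02 c10 c11 c12 c20 c21 c22 i j =
     vec3 (vec3 c00 c01 c02 j) (vec3 c10 c11 c12 j) (vec3 c20 c21 c22 j) i"

lemma dual_general_eq_translated: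
  fixes a :: real
  assumes "s \<noteq> 0" and rel: "s * p1 * (1 + a^2) + a * (q1^2 + r1^2) = 0"
  shows "\<exists>v2 v3. dual_general a p1 q1 r1 s = dual_translated a s v2 v3"
proof -
  have k: "1 + a^2 \<noteq> 0"
    by (metis add_pos_nonneg zero_less_one zero_le_power2 less_irrefl)
  define K where "K = s * (1 + a^2)"
  have "K \<noteq> 0"
    using k assms(1) by (simp add: K_def)
  have p1: "p1 = - a * (q1^2 + r1^2) / K"
    using rel \<open>K \<noteq> 0\<close> unfolding K_def by (simp add: field_simps)
  define v2 where "v2 = (a*q1 - r1) / K"
  define v3 where "v3 = (a*r1 + q1) / K"
  have "s*(a*v3-v2) = r1" "s*(a*v2+v3) = q1" "-a*s*(v2^2+v3^2) = p1"
    unfolding v2_def v3_def p1 using \<open>K \<noteq> 0\<close>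
    by (simp_all add: field_simps) (unfold K_def, algebra+)
  moreover have "s*(a*v2-v3) = ((a^2-1)*q1 - 2*a*r1)/(1+a^2)" "s*(v2+a*v3) = (2*a*q1 + (a^2-1)*r1)/(1+a^2)"
    unfolding v2_def v3_def using \<open>K \<noteq> 0\<close> k
    by (simp_all add: field_simps) (unfold K_def, algebra+)
  ultimately have "dual_general a p1 q1 r1 s = dual_translated a s v2 v3"
    unfolding dual_general_def dual_translated_def by simp
  then show ?thesis
    by blast
qed

lemma manin_iso_translate:
  "manin_iso (bianchi7 a) (dual_normal a 0 s) (bianchi7 a) (dual_translated a s v2 v3)"
  unfolding manin_iso_def
  by (intro exI[of _ "mat3 1 0 0 (-v2) 1 0 (-v3) 0 1"] exI[of _ "mat3 1 0 0 v2 1 0 v3 0 1"])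
    (simp add: inv3_def all_less_3 sum_lessThan_3 mat3_def vec3_def trans_G_def trans_Gt_def
      bianchi7_def sc_of_def dual_translated_def dual_normal_def algebra_simps power2_eq_square)

lemma manin_iso_scale:
  assumes "l > 0"
  shows "manin_iso (bianchi7 a) (dual_normal a p 0) (bianchi7 a) (dual_normal a (l^2 * p) 0)"
  unfolding manin_iso_def
  by (intro exI[of _ "mat3 1 0 0 0 (1/l) 0 0 0 (1/l)"] exI[of _ "mat3 1 0 0 0 l 0 0 0 l"])
    (use assms in \<open>simp add: inv3_def all_less_3 sum_lessThan_3 mat3_def vec3_def trans_G_def
      trans_Gt_def bianchi7_def sc_of_def dual_normal_def field_simps power2_eq_square\<close>)

lemma dual_general_normal_form:
  fixes a :: real
  assumes "a > 0" and rel: "s * p1 * (1 + a^2) + a * (q1^2 + r1^2) = 0"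
  shows "\<exists>p1' s'. normal_params p1' s' \<and>
    manin_iso (bianchi7 a) (dual_normal a p1' s') (bianchi7 a) (dual_general a p1 q1 r1 s)"
proof (cases "s = 0")
  case False
  then obtain v2 v3 where "dual_general a p1 q1 r1 s = dual_translated a s v2 v3"
    using dual_general_eq_translated[OF False rel] by blast
  then have "manin_iso (bianchi7 a) (dual_normal a 0 s) (bianchi7 a) (dual_general a p1 q1 r1 s)"
    using manin_iso_translate by simp
  then show ?thesis
    using False unfolding normal_params_def by blast
next
  case True
  then have "q1^2 + r1^2 = 0"
    using rel assms(1) by simp
  then have "dual_general a p1 q1 r1 s = dual_normal a p1 0"
    unfolding dual_general_def dual_normal_def using True by (simp add: sum_power2_eq_zero_iff)
  moreover define l where "l = (if p1 = 0 then 1 else sqrt \<bar>p1\<bar>)"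
  moreover have "l > 0" "l^2 * sgn p1 = p1"
    unfolding l_def by (auto simp: sgn_if)
  ultimately have "manin_iso (bianchi7 a) (dual_normal a (sgn p1) 0) (bianchi7 a) (dual_general a p1 q1 r1 s)"
    using manin_iso_scale[of l a "sgn p1"] by simp
  moreover have "normal_params (sgn p1) 0"
    by (simp add: normal_params_def sgn_if)
  ultimately show ?thesis
    by blast
qed

lemma bianchi7_dual_reduction:
  assumes "a > 0" and "manin (bianchi7 a) ft"
  shows "\<exists>p1 s. normal_params p1 s \<and> manin_iso (bianchi7 a) (dual_normal a p1 s) (bianchi7 a) ft"
proof -
  define p1 q1 r1 s where "p1 = ft 1 2 0" and "q1 = ft 2 0 0" and "r1 = ft 0 1 0" and "s = ft 0 1 1"
  define g where "g = sc_of (vec3 r1 s (ft 0 1 2)) (vec3 p1 (ft 1 2 1) (ft 1 2 2)) (vec3 q1 (ft 2 0 1) (ft 2 0 2))"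
  have "\<forall>i<3. \<forall>j<3. \<forall>k<3. ft i j k = - ft j i k"
    using assms(2) unfolding manin_def lie_sc_def by blast
  then have g_ft: "g i j k = ft i j k" if "i < 3" "j < 3" "k < 3" for i j k
    unfolding g_def p1_def q1_def r1_def s_def by (rule sc_of_components[OF _ that])
  then have "manin (bianchi7 a) g"
    using assms(2) by (subst manin_cong) auto
  note general = manin_bianchi7_dual_general[OF this[unfolded g_def]]
  have g_general: "g = dual_general a p1 q1 r1 s"
    unfolding g_def by (rule general(1))
  obtain p1' s' where "normal_params p1' s'"
    and iso: "manin_iso (bianchi7 a) (dual_normal a p1' s') (bianchi7 a) g"
    using dual_general_normal_form[OF assms(1) general(2)] unfolding g_general by blast
  then show ?thesis
    using manin_iso_cong_right[OF iso g_ft[symmetric]] by blast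
qed

section \<open>Automorphisms of \<open>VII\<^sub>a\<close> and uniqueness\<close>

lemma bianchi7_hom_eqs:
  fixes a :: real
  assumes hom: "\<forall>i<3. \<forall>j<3. \<forall>p<3.
      (\<Sum>m<3. C p m * bianchi7 a i j m) = (\<Sum>k<3. \<Sum>l<3. C k i * C l j * bianchi7 a k l p)"
  shows "C 0 2 = a * C 0 1" "- C 0 1 = a * C 0 2"
    "C 1 2 - a * C 1 1 = - a * C 0 0 * C 1 1 - C 0 0 * C 2 1 + a * C 1 0 * C 0 1 + C 2 0 * C 0 1"
    "C 2 2 - a * C 2 1 = C 0 0 * C 1 1 - a * C 0 0 * C 2 1 - C 1 0 * C 0 1 + a * C 2 0 * C 0 1"
    "- C 1 1 - a * C 1 2 = - a * C 0 0 * C 1 2 - C 0 0 * C 2 2 + a * C 1 0 * C 0 2 + C 2 0 * C 0 2"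
    "- C 2 1 - a * C 2 2 = C 0 0 * C 1 2 - a * C 0 0 * C 2 2 - C 1 0 * C 0 2 + a * C 2 0 * C 0 2"
  using hom[rule_format, of 0 1 0] hom[rule_format, of 0 2 0] hom[rule_format, of 0 1 1]
    hom[rule_format, of 0 1 2] hom[rule_format, of 0 2 1] hom[rule_format, of 0 2 2]
  by (simp_all add: sum_lessThan_3 bianchi7_def sc_of_def vec3_def) algebra+

lemma inv3_lower_block_nonzero:
  assumes "inv3 C D" "C 0 1 = 0" "C 0 2 = 0"
  shows "\<not> (C 1 1 = 0 \<and> C 1 2 = 0 \<and> C 2 1 = 0 \<and> C 2 2 = 0)"
proof
  assume z: "C 1 1 = 0 \<and> C 1 2 = 0 \<and> C 2 1 = 0 \<and> C 2 2 = 0"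
  have "(\<Sum>k<3. C 1 k * D k 1) = 1" "(\<Sum>k<3. C 2 k * D k 2) = 1" "(\<Sum>k<3. C 1 k * D k 2) = 0"
    using assms(1) unfolding inv3_def by auto
  then have "C 1 0 * D 0 1 = 1" "C 2 0 * D 0 2 = 1" "C 1 0 * D 0 2 = 0"
    using z by (simp_all add: sum_lessThan_3)
  then show False
    by (metis mult_eq_0_iff mult_zero_right zero_neq_one)
qed

lemma bianchi7_automorphism_form:
  fixes a :: real
  assumes "a > 0" and "inv3 C D"
    and hom: "\<forall>i<3. \<forall>j<3. \<forall>p<3.
      (\<Sum>m<3. C p m * bianchi7 a i j m) = (\<Sum>k<3. \<Sum>l<3. C k i * C l j * bianchi7 a k l p)"
  shows "C 0 0 = 1 \<and> C 0 1 = 0 \<and> C 0 2 = 0 \<and> C 2 2 = C 1 1 \<and> C 2 1 = - C 1 2 \<and>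
    (C 1 1)^2 + (C 1 2)^2 > 0"
proof -
  note E = bianchi7_hom_eqs[OF hom]
  have "C 0 1 * (1 + a^2) = 0"
    using E(1,2) by algebra
  moreover have "1 + a^2 > 0"
    by (simp add: add_pos_nonneg)
  ultimately have c01: "C 0 1 = 0"
    by simp
  then have c02: "C 0 2 = 0"
    using E(1) by simp
  define l where "l = C 0 0"
  define \<mu> where "\<mu> = a * (l - 1)"
  have F: "((1 - l)^2 + \<mu>^2) * (C 1 1 + C 2 2) = 0" "((1 - l)^2 + \<mu>^2) * (C 1 2 - C 2 1) = 0"
    "((1 + l)^2 + \<mu>^2) * (C 1 1 - C 2 2) = 0" "((1 + l)^2 + \<mu>^2) * (C 1 2 + C 2 1) = 0"
    using E(3-6) c01 c02 unfolding l_def \<mu>_def by algebra+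
  have nonzero: "\<not> (C 1 1 = 0 \<and> C 1 2 = 0 \<and> C 2 1 = 0 \<and> C 2 2 = 0)"
    by (rule inv3_lower_block_nonzero[OF assms(2) c01 c02])
  have l1: "l = 1"
  proof (rule ccontr)
    assume "l \<noteq> 1"
    then have "(1 - l)^2 + \<mu>^2 > 0"
      by (simp add: add_pos_nonneg)
    moreover have "(1 + l)^2 + \<mu>^2 > 0"
      using \<open>a > 0\<close> \<open>l \<noteq> 1\<close> unfolding \<mu>_def
      by (cases "l = -1") (simp_all add: add_pos_nonneg)
    ultimately show False
      using F nonzero by auto
  qed
  then have "C 2 2 = C 1 1" "C 2 1 = - C 1 2"
    using F(3,4) by (simp_all add: \<mu>_def)
  moreover have "(C 1 1)^2 + (C 1 2)^2 > 0"
    using nonzero calculation by (auto simp: add_pos_nonneg sum_power2_gt_zero_iff)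
  ultimately show ?thesis
    using l1 c01 c02 unfolding l_def by simp
qed

lemma dual_normal_invariants:
  fixes a :: real
  assumes C: "C 0 0 = 1" "C 0 1 = 0" "C 0 2 = 0" "C 2 2 = C 1 1" "C 2 1 = - C 1 2" "(C 1 1)^2 + (C 1 2)^2 > 0"
    and hom: "\<forall>i<3. \<forall>j<3. \<forall>p<3.
      (\<Sum>m<3. C m p * dual_normal a p1 s i j m) = (\<Sum>k<3. \<Sum>l<3. C i k * C j l * dual_normal a p1' s' k l p)"
  shows "s = s'" and "p1 = ((C 1 1)^2 + (C 1 2)^2) * p1'"
proof -
  define x y where "x = C 1 1" and "y = C 1 2"
  have "C 1 1 * s + C 1 2 * (a * s) = C 1 1 * s' + C 1 2 * (a * s')"
    "C 1 2 * s - C 1 1 * (a * s) = C 1 2 * s' - C 1 1 * (a * s')"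
    "p1 = C 1 1 * C 1 1 * p1' + C 1 2 * C 1 2 * p1'"
    using hom[rule_format, of 0 1 1] hom[rule_format, of 0 1 2] hom[rule_format, of 1 2 0] C(1-5)
    by (simp_all add: sum_lessThan_3 dual_normal_def sc_of_def vec3_def)
  then have "(x + a * y) * (s - s') = 0" "(y - a * x) * (s - s') = 0"
    and p1: "p1 = (x^2 + y^2) * p1'"
    unfolding x_def y_def by algebra+
  then have "((1 + a^2) * (x^2 + y^2)) * (s - s') = 0"
    by algebra
  moreover have "(1 + a^2) * (x^2 + y^2) > 0"
    using C(6) unfolding x_def y_def by (simp add: add_pos_nonneg)
  ultimately show "s = s'"
    by (metis less_irrefl mult_eq_0_iff right_minus_eq)
  show "p1 = ((C 1 1)^2 + (C 1 2)^2) * p1'"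
    using p1 unfolding x_def y_def .
qed

lemma dual_normal_unique:
  fixes a :: real
  assumes "a > 0" and "normal_params p1 s" and "normal_params p1' s'"
    and "manin_iso (bianchi7 a) (dual_normal a p1' s') (bianchi7 a) (dual_normal a p1 s)"
  shows "p1 = p1' \<and> s = s'"
proof -
  obtain C D where inv: "inv3 C D"
    and iso: "\<forall>i<3. \<forall>j<3. \<forall>n<3. bianchi7 a i j n = trans_G C D (bianchi7 a) i j n \<and>
      dual_normal a p1 s i j n = trans_Gt C D (dual_normal a p1' s') i j n"
    using assms(4) unfolding manin_iso_def by blast
  have "\<forall>i<3. \<forall>j<3. \<forall>n<3. bianchi7 a i j n = trans_G C D (bianchi7 a) i j n"
    using iso by blast
  then have "C 0 0 = 1 \<and> C 0 1 = 0 \<and> C 0 2 = 0 \<and> C 2 2 = C 1 1 \<and> C 2 1 = - C 1 2 \<and>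
      (C 1 1)^2 + (C 1 2)^2 > 0"
    using bianchi7_automorphism_form[OF assms(1) inv] trans_G_hom[OF inv] by blast
  then have C: "C 0 0 = 1" "C 0 1 = 0" "C 0 2 = 0" "C 2 2 = C 1 1" "C 2 1 = - C 1 2"
      "(C 1 1)^2 + (C 1 2)^2 > 0"
    by auto
  have "\<forall>i<3. \<forall>j<3. \<forall>n<3. dual_normal a p1 s i j n = trans_Gt C D (dual_normal a p1' s') i j n"
    using iso by blast
  then have "s' = s" and p1': "p1' = ((C 1 1)^2 + (C 1 2)^2) * p1"
    using dual_normal_invariants[OF C] trans_Gt_hom[OF inv] by blast+
  moreover have "p1' = p1"
  proof (cases "s = 0")
    case True
    then show ?thesis
      using assms(2,3) \<open>s' = s\<close> p1' C(6) unfolding normal_params_def by auto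
  next
    case False
    then show ?thesis
      using assms(2,3) \<open>s' = s\<close> unfolding normal_params_def by auto
  qed
  ultimately show ?thesis
    by simp
qed

lemma canonical_dual_unique:
  assumes "a > 0" and "canonical_dual a ft" "canonical_dual a ft2"
    and "manin_iso (bianchi7 a) ft g gt" "manin_iso (bianchi7 a) ft2 g gt"
  shows "ft = ft2"
proof -
  obtain p1 s p1' s' where "normal_params p1 s" "ft = dual_normal a p1 s"
    and "normal_params p1' s'" "ft2 = dual_normal a p1' s'"
    using assms(2,3) canonical_dual_iff[OF assms(1)] by meson
  moreover have "manin_iso (bianchi7 a) ft2 (bianchi7 a) ft"
    using manin_iso_trans[OF assms(5) manin_iso_sym[OF assms(4)]] .
  ultimately show ?thesis
    using dual_normal_unique[OF assms(1)] by blast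
qed

theorem mainTheorem3:
  fixes a :: real and f' ft' :: sc
  assumes "a > 0"
    and "manin f' ft'"
    and "lie_iso3 (bianchi7 a) f'"
  shows "\<exists>!ft. canonical_dual a ft \<and> manin_iso (bianchi7 a) ft f' ft'"
proof -
  obtain ft0 where "manin (bianchi7 a) ft0" and iso0: "manin_iso (bianchi7 a) ft0 f' ft'"
    using lie_iso3_manin_iso[OF assms(3,2)] by blast
  then obtain p1 s where "normal_params p1 s"
    and "manin_iso (bianchi7 a) (dual_normal a p1 s) (bianchi7 a) ft0"
    using bianchi7_dual_reduction[OF assms(1)] by blast
  then have "canonical_dual a (dual_normal a p1 s) \<and> manin_iso (bianchi7 a) (dual_normal a p1 s) f' ft'"
    using canonical_dual_iff[OF assms(1)] manin_iso_trans[OF _ iso0] by blast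
  then show ?thesis
    using canonical_dual_unique[OF assms(1)] by blast
qed

end
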